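(* Consider the binary sequential learning model with heterogeneous privacy budgets described in the context, with signal accuracy $p\in(1/2,1)$. Let $\alpha=(1-p)/p$, $\bar u=\mathbb{E}_{\varepsilon_n}\!\left[\frac{1}{1+e^{\varepsilon_n}}\right]$, and for each integer $k\ge 2$ let $$\tilde v_k=\frac{1-\alpha^{\frac{k-2}{k-1}}}{1-\alpha^{\frac{k-2}{k-1}}+\alpha^{\frac{-1}{k-1}}-\alpha}.$$ Suppose each agent $n$ adopts the randomized response strategy with flip probability $u_n(\varepsilon_n)=\frac{1}{1+e^{\varepsilon_n}}$. Then for $\bar u\in[\tilde v_k,\tilde v_{k+1})$, the information cascade threshold $k$ remains unchanged, and the probability of a correct cascade decreases with the expected flipping probability $\bar u$.
   Context: Binary model: unknown state $\theta\in\{-1,+1\}$ with uniform prior; agents $n=1,2,\dots$ act in sequence; agent $n$ privately observes $s_n\in\{-1,+1\}$, i.i.d. given $\theta$ with $\mathbb{P}(s_n=\theta\mid\theta)=p$. Each agent $n$ has a privacy budget $\varepsilon_n$ drawn independently from a distribution for which $\bar u=\mathbb{E}[1/(1+e^{\varepsilon_n})]$ exists. Before a cascade, agent $n$'s intended action equals her signal and she reports $x_n=a_n$ with probability $1-u_n$ and $x_n=-a_n$ with probability $u_n=1/(1+e^{\varepsilon_n})$. Agents interpret the public history using the expected flip probability $\bar u$: if there are $k$ more $+1$ reports than $-1$ reports, the public log-likelihood ratio is $k\log\frac{\bar u(1-p)+p(1-\bar u)}{(1-p)(1-\bar u)+\bar u p}$. Let $\bar\rho=\frac{(1-\bar u)(1-p)+\bar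 u p}{\bar u(1-p)+p(1-\bar u)}$. The information cascade threshold is $k=\lfloor\log_{\bar\rho}\frac{1-p}{p}\rfloor+1$. An information cascade starts at the first agent whose history has (number of $+1$ reports) $-$ (number of $-1$ reports) equal to $\pm k$; from then on all agents take and truthfully report the action favored by the history. It is a correct cascade if that action equals $\theta$. *)

theory Defs
  imports "HOL-Probability.Probability"
begin

definition flip_prob :: "real \<Rightarrow> real" where
  "flip_prob e = 1 / (1 + exp e)"

definition ubar :: "real measure \<Rightarrow> real" where
  "ubar D = (\<integral>e. flip_prob e \<partial>D)"

definition rho_bar :: "real \<Rightarrow> real \<Rightarrow> real" where
  "rho_bar p ub = ((1 - ub) * (1 - p) + ub * p) / (ub * (1 - p) + p * (1 - ub))"

definition cascade_threshold :: "real \<Rightarrow> real \<Rightarrow> int" where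
  "cascade_threshold p ub = \<lfloor>log (rho_bar p ub) ((1 - p) / p)\<rfloor> + 1"

definition v_tilde :: "real \<Rightarrow> nat \<Rightarrow> real" where
  "v_tilde p k = (let a = (1 - p) / p;
                      t = a powr ((real k - 2) / (real k - 1))
                  in (1 - t) / (1 - t + a powr (-1 / (real k - 1)) - a))"

text \<open>Law of a single pre-cascade report, relative to the true state theta:
  True means the report equals theta.  The agent draws her budget e from D,
  her signal is correct (s = True) with probability p, and she flips (f = True)
  with probability flip_prob e; the report equals theta iff s differs from f.\<close>
definition report_law :: "real \<Rightarrow> real measure \<Rightarrow> bool measure" where
  "report_law p D = D \<bind> (\<lambda>e. measure_pmf
      (do { s \<leftarrow> bernoulli_pmf p; f \<leftarrow> bernoulli_pmf (flip_prob e);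
            return_pmf (s \<noteq> f) }))"

definition walk :: "bool stream \<Rightarrow> nat \<Rightarrow> int" where
  "walk w n = (\<Sum>i<n. if w !! i then 1 else -1)"

text \<open>Probability of a correct cascade: the i.i.d. pre-cascade reports drive the
  public difference, which first reaches +-k (k the cascade threshold) at the
  side agreeing with theta.\<close>
definition correct_cascade_prob :: "real \<Rightarrow> real measure \<Rightarrow> real" where
  "correct_cascade_prob p D =
     (let k = cascade_threshold p (ubar D) in
      measure (stream_space (report_law p D))
        {w. \<exists>n. walk w n = k \<and> (\<forall>m<n. \<bar>walk w m\<bar> < k)})"

end

theory Submission
  imports Defs
begin

(* Before the cascade every report agrees with theta independently with probability
   q = p (1 - u) + (1 - p) u, u the mean flip probability, because mixing a Bernoulli kernel
   over the budget distribution gives the Bernoulli law of the mean.  The public difference is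
   then a q-biased random walk, and a correct cascade is the event that it reaches +k before -k;
   by gambler's ruin this has probability 1 / (1 + ((1 - q) / q)^k).  The threshold
   floor (log_rho alpha) + 1 equals k exactly when alpha^(1/(k-1)) <= rho < alpha^(1/k), and since
   rho is increasing in u this is the interval [v_k, v_(k+1)).  There k is fixed while q
   decreases in u, so the success probability decreases. *)

lemma walk_0[simp]: "walk w 0 = 0"
  by (simp add: walk_def)

lemma walk_Suc: "walk w (Suc n) = walk w n + (if w !! n then 1 else -1)"
  by (simp add: walk_def)

lemma walk_SCons_Suc: "walk (x ## w) (Suc n) = (if x then 1 else -1) + walk w n"
  unfolding walk_def by (subst sum.lessThan_Suc_shift) simp

lemma measurable_walk[measurable]:
  "(\<lambda>w. walk w n) \<in> measurable (stream_space (count_space UNIV)) (count_space UNIV)"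
proof (induction n)
  case 0
  then show ?case by simp
next
  case (Suc n)
  then show ?case unfolding walk_Suc by measurable
qed

definition hits_top_first :: "nat \<Rightarrow> int \<Rightarrow> bool stream set" where
  "hits_top_first N j = {w. \<exists>n. j + walk w n = int N \<and> (\<forall>m<n. 0 < j + walk w m \<and> j + walk w m < int N)}"

lemma sets_hits_top_first: "hits_top_first N j \<in> sets (stream_space (count_space UNIV))"
proof -
  let ?S = "stream_space (count_space UNIV)"
  have space: "space ?S = UNIV"
    by (simp add: space_stream_space)
  have level_set: "{w. P (walk w n)} \<in> sets ?S" for P n
    using measurable_sets[OF measurable_walk, of "{x. P x}" n] by (simp add: space vimage_def)
  have "hits_top_first N j = (\<Union>n. {w. j + walk w n = int N} \<inter>
          (\<Inter>m\<in>{..<n}. {w. 0 < j + walk w m \<and> j + walk w m < int N}))"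
    unfolding hits_top_first_def by auto
  also have "\<dots> \<in> sets ?S"
    using space level_set by (intro sets.countable_UN'' sets.Int sets.countable_INT'') (auto simp flip: space)
  finally show ?thesis .
qed

lemma hits_top_first_top: "hits_top_first N (int N) = UNIV"
  unfolding hits_top_first_def by (auto intro: exI[of _ 0])

lemma hits_top_first_zero:
  assumes "0 < N"
  shows "hits_top_first N 0 = {}"
proof -
  have False if "walk w n = int N" "\<forall>m<n. 0 < walk w m \<and> walk w m < int N" for w n
    using that assms by (cases n) (auto dest: spec[of _ 0])
  then show ?thesis
    unfolding hits_top_first_def by auto
qed

lemma SCons_in_hits_top_first:
  assumes "0 < j" "j < int N"
  shows "x ## w \<in> hits_top_first N j \<longleftrightarrow> w \<in> hits_top_first N (j + (if x then 1 else -1))"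
    (is "_ \<longleftrightarrow> w \<in> hits_top_first N ?j'")
proof -
  have shift: "j + walk (x ## w) (Suc m) = ?j' + walk w m" for m
    by (simp add: walk_SCons_Suc)
  show ?thesis
  proof
    assume "x ## w \<in> hits_top_first N j"
    then obtain n where n: "j + walk (x ## w) n = int N"
       "\<forall>m<n. 0 < j + walk (x ## w) m \<and> j + walk (x ## w) m < int N"
      unfolding hits_top_first_def by blast
    obtain n' where n': "n = Suc n'"
      using n(1) assms by (cases n) auto
    have "?j' + walk w n' = int N"
      using n(1) unfolding n' shift .
    moreover have "0 < ?j' + walk w m \<and> ?j' + walk w m < int N" if "m < n'" for m
      using n(2) that unfolding n' by (metis Suc_mono shift)
    ultimately show "w \<in> hits_top_first N ?j'"
      unfolding hits_top_first_def by blast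
  next
    assume "w \<in> hits_top_first N ?j'"
    then obtain n where n: "?j' + walk w n = int N"
       "\<forall>m<n. 0 < ?j' + walk w m \<and> ?j' + walk w m < int N"
      unfolding hits_top_first_def by blast
    have "0 < j + walk (x ## w) m \<and> j + walk (x ## w) m < int N" if "m < Suc n" for m
    proof (cases m)
      case 0
      then show ?thesis using assms by simp
    next
      case (Suc m')
      then show ?thesis using n(2) that by (simp add: shift)
    qed
    moreover have "j + walk (x ## w) (Suc n) = int N"
      using n(1) unfolding shift .
    ultimately show "x ## w \<in> hits_top_first N j"
      unfolding hits_top_first_def by blast
  qed
qed

lemma prob_hits_top_first_step:
  fixes q :: real
  assumes "0 \<le> q" "q \<le> 1" "0 < j" "j < int N"
  defines "P i \<equiv> measure (stream_space (measure_pmf (bernoulli_pmf q))) (hits_top_first N i)"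
  shows "P j = q * P (j + 1) + (1 - q) * P (j - 1)"
proof -
  let ?M = "measure_pmf (bernoulli_pmf q)"
  let ?S = "stream_space ?M"
  interpret S: prob_space ?S
    by (rule prob_space.prob_space_stream_space[OF prob_space_measure_pmf])
  have space: "space ?S = UNIV"
    by (simp add: space_stream_space)
  have "sets ?S = sets (stream_space (count_space UNIV))"
    by (rule sets_stream_space_cong) simp
  then have "hits_top_first N j \<in> sets ?S"
    using sets_hits_top_first by simp
  then have "emeasure ?S (hits_top_first N j) =
      (\<integral>\<^sup>+t. emeasure ?S {w \<in> space ?S. t ## w \<in> hits_top_first N j} \<partial>?M)"
    by (rule prob_space.emeasure_stream_space[OF prob_space_measure_pmf])
  also have "\<dots> = (\<integral>\<^sup>+t. emeasure ?S (hits_top_first N (j + (if t then 1 else -1))) \<partial>?M)"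
    using SCons_in_hits_top_first[OF assms(3,4)] by (simp add: space)
  also have "\<dots> = ennreal q * emeasure ?S (hits_top_first N (j + 1))
      + ennreal (1 - q) * emeasure ?S (hits_top_first N (j - 1))"
    using assms(1,2) by (simp add: ac_simps)
  finally show ?thesis
    using assms(1,2) unfolding P_def
    by (simp add: S.emeasure_eq_measure flip: ennreal_mult ennreal_plus)
qed

lemma recurrence_geometric_increments:
  fixes e :: "nat \<Rightarrow> real" and q :: real
  assumes "0 < q"
    and rec: "\<And>i. 0 < i \<Longrightarrow> i < N \<Longrightarrow> e i = q * e (Suc i) + (1 - q) * e (i - 1)"
    and "i \<le> N"
  shows "e i = e 0 + (e 1 - e 0) * (\<Sum>l<i. ((1 - q) / q) ^ l)"
proof -
  define r where "r = (1 - q) / q"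
  have increment: "e (Suc l) - e l = (e 1 - e 0) * r ^ l" if "Suc l \<le> N" for l
    using that
  proof (induction l)
    case 0
    show ?case by simp
  next
    case (Suc l)
    have "q * (e (Suc (Suc l)) - e (Suc l)) = (1 - q) * (e (Suc l) - e l)"
      using rec[of "Suc l"] Suc.prems by (simp add: algebra_simps)
    then have "e (Suc (Suc l)) - e (Suc l) = r * (e (Suc l) - e l)"
      using \<open>0 < q\<close> by (simp add: r_def field_simps)
    with Suc show ?case by (simp add: ac_simps)
  qed
  have "e i - e 0 = (\<Sum>l<i. e (Suc l) - e l)"
    by (simp add: sum_lessThan_telescope)
  also have "\<dots> = (\<Sum>l<i. (e 1 - e 0) * r ^ l)"
    using \<open>i \<le> N\<close> by (intro sum.cong refl increment) simp
  finally show ?thesis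
    by (simp add: r_def flip: sum_distrib_left)
qed

lemma gamblers_ruin:
  fixes q :: real and N j :: nat
  assumes "0 < q" "q \<le> 1" "q \<noteq> 1/2" "0 < N" "j \<le> N"
  defines "r \<equiv> (1 - q) / q"
  shows "measure (stream_space (measure_pmf (bernoulli_pmf q))) (hits_top_first N (int j))
           = (1 - r ^ j) / (1 - r ^ N)"
proof -
  let ?S = "stream_space (measure_pmf (bernoulli_pmf q))"
  interpret S: prob_space ?S
    by (rule prob_space.prob_space_stream_space[OF prob_space_measure_pmf])
  define e where "e i = measure ?S (hits_top_first N (int i))" for i
  have "r \<noteq> 1"
    using assms(1,3) by (auto simp: r_def field_simps)
  have "0 \<le> r"
    using assms(1,2) by (simp add: r_def)
  with \<open>r \<noteq> 1\<close> have "r ^ N \<noteq> 1"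
    using \<open>0 < N\<close> power_eq_1_iff[of r N] by auto
  have "e 0 = 0"
    using \<open>0 < N\<close> by (simp add: e_def hits_top_first_zero)
  have rec: "e i = q * e (Suc i) + (1 - q) * e (i - 1)" if "0 < i" "i < N" for i
    using prob_hits_top_first_step[of q "int i" N] assms(1,2) that
    by (simp add: e_def add.commute)
  have e_sol: "e i = e 1 * ((1 - r ^ i) / (1 - r))" if "i \<le> N" for i
    using recurrence_geometric_increments[of q N e i, OF \<open>0 < q\<close> rec that] \<open>e 0 = 0\<close> \<open>r \<noteq> 1\<close>
    by (simp add: sum_gp_strict flip: r_def)
  have "e N = 1"
    using S.prob_space by (simp add: e_def hits_top_first_top space_stream_space)
  then have "e 1 = (1 - r) / (1 - r ^ N)"
    using e_sol[of N] \<open>r \<noteq> 1\<close> \<open>r ^ N \<noteq> 1\<close> by (simp add: field_simps)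
  then show ?thesis
    using e_sol[OF \<open>j \<le> N\<close>] \<open>r \<noteq> 1\<close> by (simp add: e_def)
qed

corollary gamblers_ruin_midpoint:
  fixes q :: real and K :: nat
  assumes "1/2 < q" "q \<le> 1" "0 < K"
  shows "measure (stream_space (measure_pmf (bernoulli_pmf q))) (hits_top_first (2 * K) (int K))
           = 1 / (1 + ((1 - q) / q) ^ K)"
proof -
  define r where "r = (1 - q) / q"
  have "0 \<le> r" "r < 1"
    using assms(1,2) by (simp_all add: r_def field_simps)
  then have "r ^ K < 1"
    using \<open>0 < K\<close> by (simp add: power_less_one_iff)
  have "r ^ (2 * K) = r ^ K * r ^ K"
    by (simp add: mult_2 power_add)
  then have "1 - r ^ (2 * K) = (1 - r ^ K) * (1 + r ^ K)"
    by (simp add: algebra_simps)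
  then have "(1 - r ^ K) / (1 - r ^ (2 * K)) = 1 / (1 + r ^ K)"
    using \<open>r ^ K < 1\<close> by simp
  then show ?thesis
    using gamblers_ruin[of q "2 * K" K] assms by (simp flip: r_def)
qed

lemma gamblers_ruin_midpoint_strict_mono:
  fixes q q' :: real
  assumes "1/2 < q'" "q' < q" "q \<le> 1" "0 < k"
  shows "1 / (1 + ((1 - q') / q') ^ k) < 1 / (1 + ((1 - q) / q) ^ k)"
proof -
  have "0 \<le> (1 - q) / q" "(1 - q) / q < (1 - q') / q'"
    using assms(1-3) by (simp_all add: field_simps)
  then have "((1 - q) / q) ^ k < ((1 - q') / q') ^ k"
    using \<open>0 < k\<close> by (intro power_strict_mono) auto
  with \<open>0 \<le> (1 - q) / q\<close> show ?thesis
    by (simp add: frac_less2 add_pos_nonneg)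
qed

lemma emeasure_bernoulli_pmf:
  assumes "0 \<le> x" "x \<le> 1"
  shows "emeasure (measure_pmf (bernoulli_pmf x)) A = ennreal (\<Sum>b\<in>A. if b then x else 1 - x)"
proof -
  have "pmf (bernoulli_pmf x) b = (if b then x else 1 - x)" for b
    using assms by (cases b) simp_all
  then show ?thesis
    by (simp add: emeasure_measure_pmf_finite)
qed

lemma bind_bernoulli_pmf:
  fixes g :: "'a \<Rightarrow> real"
  assumes D: "prob_space D" and g: "g \<in> borel_measurable D"
    and g01: "\<And>x. x \<in> space D \<Longrightarrow> 0 \<le> g x \<and> g x \<le> 1"
  shows "D \<bind> (\<lambda>x. measure_pmf (bernoulli_pmf (g x))) = measure_pmf (bernoulli_pmf (\<integral>x. g x \<partial>D))"
proof -
  interpret prob_space D by (rule D)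
  let ?K = "\<lambda>x. measure_pmf (bernoulli_pmf (g x))"
  have int_g: "integrable D g"
    using g g01 by (intro integrable_const_bound[where B=1]) auto
  have "0 \<le> (\<integral>x. g x \<partial>D)"
    using g01 by (intro integral_nonneg_AE) auto
  moreover have "(\<integral>x. g x \<partial>D) \<le> 1"
    using g01 int_g integral_mono[OF int_g integrable_const[of 1]] by (simp add: prob_space)
  ultimately have mean01: "0 \<le> (\<integral>x. g x \<partial>D)" "(\<integral>x. g x \<partial>D) \<le> 1" .
  have K_meas: "?K \<in> measurable D (subprob_algebra (count_space UNIV))"
  proof (rule measurable_subprob_algebra)
    fix A :: "bool set"
    have "(\<lambda>x. ennreal (\<Sum>b\<in>A. if b then g x else 1 - g x)) \<in> borel_measurable D"
      using g by measurable
    then show "(\<lambda>x. emeasure (?K x) A) \<in> borel_measurable D"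
      by (rule measurable_cong[THEN iffD2, rotated]) (simp add: emeasure_bernoulli_pmf g01)
  qed (auto simp: subprob_space_measure_pmf)
  show ?thesis
  proof (rule measure_eqI_finite[where A=UNIV])
    show "sets (D \<bind> ?K) = Pow UNIV"
      by (subst sets_bind[where N="count_space UNIV"]) (auto simp: not_empty)
  next
    fix b :: bool
    have "emeasure (D \<bind> ?K) {b} = (\<integral>\<^sup>+x. emeasure (?K x) {b} \<partial>D)"
      by (rule emeasure_bind[OF not_empty K_meas]) simp
    also have "\<dots> = (\<integral>\<^sup>+x. ennreal (if b then g x else 1 - g x) \<partial>D)"
      by (intro nn_integral_cong) (simp add: emeasure_bernoulli_pmf g01)
    also have "\<dots> = ennreal (\<integral>x. (if b then g x else 1 - g x) \<partial>D)"
      using int_g g01 by (intro nn_integral_eq_integral) (cases b; simp)+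
    also have "\<dots> = emeasure (measure_pmf (bernoulli_pmf (\<integral>x. g x \<partial>D))) {b}"
      using int_g mean01 by (cases b) (simp_all add: emeasure_bernoulli_pmf prob_space)
    finally show "emeasure (D \<bind> ?K) {b} = emeasure (measure_pmf (bernoulli_pmf (\<integral>x. g x \<partial>D))) {b}" .
  qed auto
qed

lemma randomized_response_prob_bounds:
  fixes p x :: real
  assumes "0 \<le> p" "p \<le> 1" "0 \<le> x" "x \<le> 1"
  shows "0 \<le> p - (2 * p - 1) * x" "p - (2 * p - 1) * x \<le> 1"
proof -
  have "0 \<le> p * (1 - x)" "0 \<le> (1 - p) * x" "0 \<le> (1 - p) * (1 - x)" "0 \<le> p * x"
    using assms by simp_all
  then show "0 \<le> p - (2 * p - 1) * x" "p - (2 * p - 1) * x \<le> 1"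
    by (simp_all add: algebra_simps)
qed

lemma randomized_response_pmf:
  fixes p x :: real
  assumes "0 \<le> p" "p \<le> 1" "0 \<le> x" "x \<le> 1"
  shows "do { s \<leftarrow> bernoulli_pmf p; f \<leftarrow> bernoulli_pmf x; return_pmf (s \<noteq> f) }
           = bernoulli_pmf (p - (2 * p - 1) * x)"
proof (rule pmf_eqI)
  fix b :: bool
  show "pmf (do { s \<leftarrow> bernoulli_pmf p; f \<leftarrow> bernoulli_pmf x; return_pmf (s \<noteq> f) }) b
          = pmf (bernoulli_pmf (p - (2 * p - 1) * x)) b"
    using assms randomized_response_prob_bounds[OF assms]
    by (cases b) (simp_all add: pmf_bind algebra_simps)
qed

lemma flip_prob_pos: "0 < flip_prob e"
  by (simp add: flip_prob_def add_pos_pos)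

lemma flip_prob_less_1: "flip_prob e < 1"
  by (simp add: flip_prob_def add_pos_pos)

lemma borel_measurable_flip_prob[measurable]: "flip_prob \<in> borel_measurable borel"
  unfolding flip_prob_def by measurable

lemma ubar_nonneg: "0 \<le> ubar D"
  unfolding ubar_def by (intro integral_nonneg_AE) (simp add: flip_prob_pos less_imp_le)

lemma report_law_eq_bernoulli:
  assumes D: "prob_space D" "sets D = sets borel" and p: "0 \<le> p" "p \<le> 1"
  shows "report_law p D = measure_pmf (bernoulli_pmf (p - (2 * p - 1) * ubar D))"
proof -
  interpret prob_space D by (rule D(1))
  have flip_meas: "flip_prob \<in> borel_measurable D"
    by (subst measurable_cong_sets[OF D(2) refl]) (rule borel_measurable_flip_prob)
  have flip01: "0 \<le> flip_prob e" "flip_prob e \<le> 1" for e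
    using flip_prob_pos flip_prob_less_1 less_imp_le by auto
  have "integrable D flip_prob"
    using flip_meas flip01 by (intro integrable_const_bound[where B=1]) auto
  then have mean: "(\<integral>e. p - (2 * p - 1) * flip_prob e \<partial>D) = p - (2 * p - 1) * ubar D"
    by (simp add: ubar_def prob_space)
  have "report_law p D = D \<bind> (\<lambda>e. measure_pmf (bernoulli_pmf (p - (2 * p - 1) * flip_prob e)))"
    unfolding report_law_def randomized_response_pmf[OF p flip01] ..
  also have "\<dots> = measure_pmf (bernoulli_pmf (\<integral>e. p - (2 * p - 1) * flip_prob e \<partial>D))"
    using flip_meas p flip01 randomized_response_prob_bounds
    by (intro bind_bernoulli_pmf D(1)) auto
  finally show ?thesis
    unfolding mean .
qed

lemma rho_bar_eq:
  assumes "0 < p"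
  defines "a \<equiv> (1 - p) / p"
  shows "rho_bar p u = (a + u * (1 - a)) / (1 - u * (1 - a))"
proof -
  have "a + u * (1 - a) = ((1 - u) * (1 - p) + u * p) / p"
       "1 - u * (1 - a) = (u * (1 - p) + p * (1 - u)) / p"
    using assms by (simp_all add: a_def field_simps)
  then show ?thesis
    using assms by (simp add: rho_bar_def)
qed

lemma v_tilde_eq:
  assumes "0 < p" "p < 1" "2 \<le> k"
  defines "a \<equiv> (1 - p) / p"
  defines "b \<equiv> a powr (1 / (real k - 1))"
  shows "v_tilde p k = (b - a) / ((1 + b) * (1 - a))"
proof -
  have "0 < a"
    using assms(1,2) by (simp add: a_def)
  then have "0 < b"
    by (simp add: b_def)
  have "(real k - 2) / (real k - 1) = 1 - 1 / (real k - 1)"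
    using assms(3) by (simp add: field_simps)
  then have "a powr ((real k - 2) / (real k - 1)) = a / b"
    using \<open>0 < a\<close> by (simp add: powr_diff b_def)
  moreover have "a powr (-1 / (real k - 1)) = 1 / b"
    by (simp add: b_def powr_minus_divide)
  ultimately have "v_tilde p k = (1 - a / b) / (1 - a / b + 1 / b - a)"
    by (simp add: v_tilde_def Let_def flip: a_def)
  also have "\<dots> = (b * (1 - a / b)) / (b * (1 - a / b + 1 / b - a))"
    using \<open>0 < b\<close> by simp
  also have "\<dots> = (b - a) / ((1 + b) * (1 - a))"
    using \<open>0 < b\<close> by (simp add: algebra_simps)
  finally show ?thesis .
qed

lemma v_tilde_less_half:
  assumes "1/2 < p" "p < 1" "2 \<le> k"
  shows "v_tilde p k < 1/2"
proof -
  define a where "a = (1 - p) / p"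
  define b where "b = a powr (1 / (real k - 1))"
  have "0 < a" "a < 1"
    using assms(1,2) by (simp_all add: a_def field_simps)
  moreover have "b < 1"
    using \<open>0 < a\<close> \<open>a < 1\<close> assms(3) by (simp add: b_def powr01_less_one)
  ultimately have "2 * (b - a) < (1 + b) * (1 - a)"
    using mult_pos_pos[of "1 - b" "1 + a"] by (simp add: algebra_simps)
  moreover have "0 < (1 + b) * (1 - a)"
    using \<open>0 < a\<close> \<open>a < 1\<close> by (simp add: b_def add_pos_nonneg)
  ultimately show ?thesis
    using assms by (simp add: v_tilde_eq divide_less_eq flip: a_def b_def)
qed

lemma v_tilde_le_iff:
  assumes "1/2 < p" "p < 1" "2 \<le> k" "u < 1"
  defines "a \<equiv> (1 - p) / p"
  shows "v_tilde p k \<le> u \<longleftrightarrow> a powr (1 / (real k - 1)) \<le> rho_bar p u"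
proof -
  define b where "b = a powr (1 / (real k - 1))"
  define c where "c = u * (1 - a)"
  have "0 < a" "a < 1"
    using assms(1,2) by (simp_all add: a_def field_simps)
  have "c < 1"
  proof (cases "u \<le> 0")
    case True
    then have "c \<le> 0"
      using \<open>a < 1\<close> by (simp add: c_def mult_nonpos_nonneg)
    then show ?thesis
      by simp
  next
    case False
    then have "c \<le> u"
      using \<open>0 < a\<close> by (simp add: c_def mult_left_le)
    then show ?thesis
      using \<open>u < 1\<close> by simp
  qed
  have "0 < (1 + b) * (1 - a)"
    using \<open>0 < a\<close> \<open>a < 1\<close> by (simp add: b_def add_pos_nonneg)
  then have "v_tilde p k \<le> u \<longleftrightarrow> b - a \<le> u * ((1 + b) * (1 - a))"
    using assms(1-3) by (simp add: v_tilde_eq pos_divide_le_eq flip: a_def b_def)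
  also have "\<dots> \<longleftrightarrow> b * (1 - c) \<le> a + c"
    by (simp add: c_def algebra_simps)
  also have "\<dots> \<longleftrightarrow> b \<le> (a + c) / (1 - c)"
    using \<open>c < 1\<close> by (simp add: le_divide_eq)
  also have "\<dots> \<longleftrightarrow> b \<le> rho_bar p u"
    using assms(1) by (simp add: rho_bar_eq c_def flip: a_def)
  finally show ?thesis
    unfolding b_def .
qed

lemma floor_log_eq:
  fixes a x :: real and n :: nat
  assumes "0 < a" "a < 1" "0 < n"
    and lower: "a powr (1 / n) \<le> x" and upper: "x < a powr (1 / (n + 1))"
  shows "\<lfloor>log x a\<rfloor> = int n"
proof -
  have "0 < a powr (1 / n)"
    using \<open>0 < a\<close> by simp
  then have "0 < x"
    using lower by linarith
  moreover have "x < 1"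
    using upper powr01_less_one[of a "1 / (n + 1)"] assms(1,2) by simp
  ultimately have "ln x < 0"
    by simp
  have "ln (a powr (1 / n)) \<le> ln x"
    using lower \<open>0 < a powr (1 / n)\<close> \<open>0 < x\<close> by (subst ln_le_cancel_iff)
  then have "ln a \<le> ln x * n"
    using \<open>0 < n\<close> by (simp add: pos_divide_le_eq)
  then have lower_log: "real n \<le> ln a / ln x"
    using \<open>ln x < 0\<close> by (simp add: le_divide_eq mult.commute)
  have "ln x < ln (a powr (1 / (n + 1)))"
    using upper \<open>0 < x\<close> \<open>0 < a\<close> by (subst ln_less_cancel_iff) simp_all
  then have "ln x * (n + 1) < ln a"
    by (simp add: pos_less_divide_eq add_pos_nonneg)
  then have upper_log: "ln a / ln x < real n + 1"
    using \<open>ln x < 0\<close> by (simp add: divide_less_eq ac_simps)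
  show ?thesis
    unfolding log_def using lower_log upper_log by (simp add: floor_eq_iff)
qed

lemma cascade_threshold_eq:
  assumes "1/2 < p" "p < 1" "2 \<le> k" "v_tilde p k \<le> u" "u < v_tilde p (k + 1)"
  shows "cascade_threshold p u = int k"
proof -
  define a where "a = (1 - p) / p"
  have "0 < a" "a < 1"
    using assms(1,2) by (simp_all add: a_def field_simps)
  have "u < 1"
    using assms(5) v_tilde_less_half[of p "k + 1"] assms(1-3) by simp
  then have "a powr (1 / real (k - 1)) \<le> rho_bar p u"
    using v_tilde_le_iff[of p k u] assms(1-4) by (simp add: a_def)
  moreover have "rho_bar p u < a powr (1 / (real (k - 1) + 1))"
    using v_tilde_le_iff[of p "k + 1" u] \<open>u < 1\<close> assms(1-3,5) by (simp add: a_def)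
  ultimately have "\<lfloor>log (rho_bar p u) a\<rfloor> = int (k - 1)"
    using \<open>0 < a\<close> \<open>a < 1\<close> assms(3) by (intro floor_log_eq) auto
  then show ?thesis
    using assms(3) by (simp add: cascade_threshold_def flip: a_def)
qed

lemma correct_cascade_event_eq:
  "{w. \<exists>n. walk w n = int K \<and> (\<forall>m<n. \<bar>walk w m\<bar> < int K)} = hits_top_first (2 * K) (int K)"
  unfolding hits_top_first_def by (intro Collect_cong ex_cong1 conj_cong all_cong) auto

lemma correct_cascade_prob_eq:
  assumes "1/2 < p" "p < 1" "prob_space D" "sets D = sets borel"
    and "cascade_threshold p (ubar D) = int k" "0 < k" "ubar D < 1/2"
  defines "q \<equiv> p - (2 * p - 1) * ubar D"
  shows "correct_cascade_prob p D = 1 / (1 + ((1 - q) / q) ^ k)"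
proof -
  have "(2 * p - 1) * ubar D < (2 * p - 1) * (1/2)"
    using assms(1,7) by (intro mult_strict_left_mono) auto
  then have "1/2 < q"
    by (simp add: q_def algebra_simps)
  have "0 \<le> (2 * p - 1) * ubar D"
    using assms(1) ubar_nonneg by simp
  then have "q \<le> 1"
    using assms(2) by (simp add: q_def)
  have "report_law p D = measure_pmf (bernoulli_pmf q)"
    unfolding q_def using assms(1-4) by (intro report_law_eq_bernoulli) auto
  then show ?thesis
    unfolding correct_cascade_prob_def Let_def assms(5) correct_cascade_event_eq
    using gamblers_ruin_midpoint[OF \<open>1/2 < q\<close> \<open>q \<le> 1\<close> \<open>0 < k\<close>] by simp
qed

theorem theorem3:
  fixes p :: real and k :: nat
  assumes "1/2 < p" and "p < 1" and "k \<ge> 2"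
  shows "(\<forall>ub. v_tilde p k \<le> ub \<and> ub < v_tilde p (k + 1)
            \<longrightarrow> cascade_threshold p ub = int k)
       \<and> (\<forall>D1 D2 :: real measure.
            prob_space D1 \<and> sets D1 = sets borel \<and>
            prob_space D2 \<and> sets D2 = sets borel \<and>
            v_tilde p k \<le> ubar D1 \<and> ubar D2 < v_tilde p (k + 1) \<and>
            ubar D1 < ubar D2
            \<longrightarrow> correct_cascade_prob p D2 < correct_cascade_prob p D1)"
proof (intro conjI allI impI)
  fix ub
  assume "v_tilde p k \<le> ub \<and> ub < v_tilde p (k + 1)"
  then show "cascade_threshold p ub = int k"
    using cascade_threshold_eq assms by blast
next
  fix D1 D2 :: "real measure"
  assume D: "prob_space D1 \<and> sets D1 = sets borel \<and> prob_space D2 \<and> sets D2 = sets borel \<and>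
    v_tilde p k \<le> ubar D1 \<and> ubar D2 < v_tilde p (k + 1) \<and> ubar D1 < ubar D2"
  define q1 where "q1 = p - (2 * p - 1) * ubar D1"
  define q2 where "q2 = p - (2 * p - 1) * ubar D2"
  have "ubar D2 < 1/2"
    using D v_tilde_less_half[of p "k + 1"] assms by simp
  moreover have "cascade_threshold p (ubar D1) = int k" "cascade_threshold p (ubar D2) = int k"
    using D assms by (auto intro!: cascade_threshold_eq)
  ultimately have "correct_cascade_prob p D1 = 1 / (1 + ((1 - q1) / q1) ^ k)"
    "correct_cascade_prob p D2 = 1 / (1 + ((1 - q2) / q2) ^ k)"
    using D assms unfolding q1_def q2_def by (auto intro!: correct_cascade_prob_eq)
  moreover have "(2 * p - 1) * ubar D2 < (2 * p - 1) * (1/2)"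
    "(2 * p - 1) * ubar D1 < (2 * p - 1) * ubar D2" "0 \<le> (2 * p - 1) * ubar D1"
    using assms(1) D \<open>ubar D2 < 1/2\<close> ubar_nonneg by (auto intro!: mult_strict_left_mono)
  then have "1/2 < q2" "q2 < q1" "q1 \<le> 1"
    using assms(2) by (simp_all add: q1_def q2_def algebra_simps)
  ultimately show "correct_cascade_prob p D2 < correct_cascade_prob p D1"
    using assms by (simp add: gamblers_ruin_midpoint_strict_mono)
qed

end
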